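(* Assume (1) $D\in C^4(\mathbb{R}^d)$, $\rho_{eq}\in C^4(\mathbb{R}^d)$ with $\rho_{eq}>0$, and all partial derivatives of $D$ and $\ln\rho_{eq}$ of orders $1$ through $4$ are bounded; (2) $\|\nabla^2D(x)\|$ and $\|\nabla^2\ln\rho_{eq}(x)\|$ are bounded by a polynomial in $x$, and $\inf_xD(x)>0$. Let $g:\mathbb{R}^d\to\mathbb{R}$ be a polynomial. Then there are functions $K(x)$, $K^*(x)$ of at most polynomial growth such that for all $x\in\mathbb{R}^d$ and $\epsilon\in(0,1]$, $$\Big|\int_{\mathbb{R}^d} z\,q(x,z)\big(\beta(x,z,\epsilon)-1\big)\,dz-a(x)\epsilon\Big|\le K(x)\epsilon^2,\qquad \Big|\int_{\mathbb{R}^d} g(z)\,q(x,z)\big(\beta(x,z,\epsilon)-1\big)\,dz\Big|\le K^*(x)\epsilon.$$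
   Context: Define $a(x)=\nabla D(x)+D(x)\nabla\ln\rho_{eq}(x)$, $q(x,z)=(4\pi D(x))^{-d/2}\exp\big(-\frac{|z|^2}{4D(x)}\big)$ for $x,z\in\mathbb{R}^d$, and $$\beta(x,z,\epsilon)=\min\Big(1,\exp\Big(\epsilon\frac{\nabla_xq(x,z)\cdot z}{q(x,z)}+\epsilon\frac{\nabla\rho_{eq}(x)\cdot z}{\rho_{eq}(x)}\Big)\Big),$$ where $\nabla_x$ denotes the gradient in the first argument. *)

theory Defs
  imports "HOL-Analysis.Analysis"
begin

definition pd :: "'n::finite \<Rightarrow> (real^'n \<Rightarrow> real) \<Rightarrow> real^'n \<Rightarrow> real" where
  "pd i f x = deriv (\<lambda>t. f (x + t *\<^sub>R axis i 1)) 0"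

fun ipd :: "'n::finite list \<Rightarrow> (real^'n \<Rightarrow> real) \<Rightarrow> real^'n \<Rightarrow> real" where
  "ipd [] f = f"
| "ipd (i # is) f = pd i (ipd is f)"

definition Ck :: "nat \<Rightarrow> (real^'n::finite \<Rightarrow> real) \<Rightarrow> bool" where
  "Ck k f \<longleftrightarrow>
     (\<forall>is i x. length is < k \<longrightarrow>
        (\<lambda>t. ipd is f (x + t *\<^sub>R axis i 1)) field_differentiable (at 0)) \<and>
     (\<forall>is. length is \<le> k \<longrightarrow> continuous_on UNIV (ipd is f))"

definition grad :: "(real^'n::finite \<Rightarrow> real) \<Rightarrow> real^'n \<Rightarrow> real^'n" where
  "grad f x = (\<chi> i. pd i f x)"

definition hess :: "(real^'n::finite \<Rightarrow> real) \<Rightarrow> real^'n \<Rightarrow> real^'n^'n" where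
  "hess f x = (\<chi> i j. ipd [i, j] f x)"

definition poly_growth :: "('a::real_normed_vector \<Rightarrow> real) \<Rightarrow> bool" where
  "poly_growth K \<longleftrightarrow> (\<exists>C (N::nat). \<forall>x. \<bar>K x\<bar> \<le> C * (1 + norm x) ^ N)"

inductive_set poly_fun :: "(real^'n::finite \<Rightarrow> real) set" where
  const: "(\<lambda>_. c) \<in> poly_fun"
| coord: "(\<lambda>x. x $ i) \<in> poly_fun"
| add: "f \<in> poly_fun \<Longrightarrow> g \<in> poly_fun \<Longrightarrow> (\<lambda>x. f x + g x) \<in> poly_fun"
| mult: "f \<in> poly_fun \<Longrightarrow> g \<in> poly_fun \<Longrightarrow> (\<lambda>x. f x * g x) \<in> poly_fun"

definition drift :: "(real^'n::finite \<Rightarrow> real) \<Rightarrow> (real^'n \<Rightarrow> real) \<Rightarrow> real^'n \<Rightarrow> real^'n" where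
  "drift D \<rho> x = grad D x + D x *\<^sub>R grad (\<lambda>y. ln (\<rho> y)) x"

definition qk :: "(real^'n::finite \<Rightarrow> real) \<Rightarrow> real^'n \<Rightarrow> real^'n \<Rightarrow> real" where
  "qk D x z = (4 * pi * D x) powr (- real CARD('n) / 2) * exp (- (norm z)\<^sup>2 / (4 * D x))"

definition acc :: "(real^'n::finite \<Rightarrow> real) \<Rightarrow> (real^'n \<Rightarrow> real) \<Rightarrow> real^'n \<Rightarrow> real^'n \<Rightarrow> real \<Rightarrow> real" where
  "acc D \<rho> x z \<epsilon> = min 1 (exp (\<epsilon> * (grad (\<lambda>y. qk D y z) x \<bullet> z) / qk D x z
                                 + \<epsilon> * (grad \<rho> x \<bullet> z) / \<rho> x))"

end

theory Submission
  imports Defs "HOL-Probability.Probability"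
begin

text \<open>
  Write \<open>s = D x\<close>, \<open>u = \<nabla>D x\<close>, \<open>v = \<nabla>ln \<rho> x\<close>. The kernel \<open>q(x,\<cdot>)\<close> is the
  isotropic Gaussian \<open>gauss s\<close> with variance \<open>2s\<close> per coordinate, and differentiating it in
  \<open>s\<close> shows that the Metropolis factor is \<open>\<beta> = min 1 (exp (\<epsilon> L(z)))\<close> with the odd, cubic
  exponent \<open>L = accept_exponent s u v\<close>. Then
  (1) \<open>min 1 (e^t) - 1 = min 0 t + O(t\<^sup>2)\<close> and \<open>min 0 t = t/2 - |t|/2\<close>; the \<open>|t|\<close> part is even
    in \<open>z\<close>, so its first moment vanishes, and the first moment of \<open>\<epsilon>L/2\<close> is computed exactly
    from the second and fourth Gaussian moments: it equals \<open>\<epsilon>(u + s v) = \<epsilon> a(x)\<close>;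
  (2) all remaining terms are bounded by Gaussian integrals of \<open>(1 + |z|)^m\<close>, which are
    polynomial in \<open>s\<close>; since \<open>D\<close> grows at most linearly, this gives polynomial growth in \<open>x\<close>.
\<close>

definition gauss :: "real \<Rightarrow> real^'n::finite \<Rightarrow> real" where
  "gauss s z = (4 * pi * s) powr (- real CARD('n) / 2) * exp (- (norm z)\<^sup>2 / (4 * s))"

lemma qk_gauss: "qk D x z = gauss (D x) z"
  by (simp add: qk_def gauss_def)

lemma gauss_pos: "s > 0 \<Longrightarrow> gauss s z > 0"
  by (simp add: gauss_def)

lemma gauss_even: "gauss s (- z) = gauss s z"
  by (simp add: gauss_def)

lemma gauss_measurable [measurable]: "gauss s \<in> borel_measurable borel"
  unfolding gauss_def[abs_def] by measurable

lemma lborel_integral_prod_Basis: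
  fixes f :: "'a::euclidean_space \<Rightarrow> real \<Rightarrow> real"
  assumes int: "\<And>b. integrable lborel (f b)"
  shows "integrable lborel (\<lambda>x::'a. \<Prod>b\<in>Basis. f b (x \<bullet> b))
     \<and> (\<integral>x. (\<Prod>b\<in>Basis. f b (x \<bullet> b)) \<partial>lborel) = (\<Prod>b\<in>Basis. \<integral>t. f b t \<partial>lborel)"
proof -
  interpret P: product_sigma_finite "\<lambda>_::'a. lborel::real measure"
    by (simp add: product_sigma_finite_def lborel.sigma_finite_measure_axioms)
  have [measurable]: "\<And>b. f b \<in> borel_measurable borel"
    using int borel_measurable_integrable by auto
  have eq: "(\<Prod>b\<in>Basis. f b ((\<Sum>b'\<in>Basis. \<omega> b' *\<^sub>R b') \<bullet> b)) = (\<Prod>b\<in>Basis. f b (\<omega> b))" for \<omega>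
    by (intro prod.cong refl) (simp add: inner_sum_left inner_Basis if_distrib sum.delta cong: if_cong)
  have "integrable (PiM Basis (\<lambda>_. lborel)) (\<lambda>\<omega>. \<Prod>b\<in>Basis. f b (\<omega> b))"
    by (rule P.product_integrable_prod) (auto intro: int)
  then show ?thesis
    by (subst (1 2) lborel_eq)
       (simp add: integrable_distr_eq integral_distr eq P.product_integral_prod int)
qed

lemma lborel_integral_prod_cart:
  fixes h :: "'n::finite \<Rightarrow> real \<Rightarrow> real"
  assumes int: "\<And>i. integrable lborel (h i)"
  shows "integrable lborel (\<lambda>z::real^'n. \<Prod>i\<in>UNIV. h i (z$i))
     \<and> (\<integral>z. (\<Prod>i\<in>UNIV. h i (z$i)) \<partial>lborel) = (\<Prod>i\<in>UNIV. \<integral>t. h i t \<partial>lborel)"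
proof -
  define f where "f b = h (SOME i. b = axis i (1::real))" for b :: "real^'n"
  have f_axis: "f (axis i 1) = h i" for i
    unfolding f_def by (rule arg_cong[where f=h]) (auto simp: axis_eq_axis)
  have inj: "inj (\<lambda>i::'n. axis i (1::real))"
    by (auto simp: inj_def axis_eq_axis)
  have Basis: "(Basis :: (real^'n) set) = range (\<lambda>i. axis i 1)"
    using axis_inverse axis_in_Basis_iff by auto
  have prod_Basis: "(\<Prod>b\<in>(Basis::(real^'n) set). F b) = (\<Prod>i\<in>UNIV. F (axis i 1))" for F :: "real^'n \<Rightarrow> real"
    unfolding Basis by (subst prod.reindex[OF inj]) simp
  have "\<And>b. integrable lborel (f b)" unfolding f_def by (rule int)
  from lborel_integral_prod_Basis[of f, OF this]
  show ?thesis unfolding prod_Basis f_axis by (simp add: inner_axis)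
qed

lemma norm_sq_cart: "(norm (z::real^'n::finite))\<^sup>2 = (\<Sum>i\<in>UNIV. (z$i)\<^sup>2)"
  by (subst power2_norm_eq_inner) (simp add: inner_vec_def power2_eq_square)

lemma gauss_prod:
  assumes s: "s > 0"
  shows "gauss s (z::real^'n::finite) = (\<Prod>i\<in>UNIV. normal_density 0 (sqrt (2 * s)) (z$i))"
proof -
  have p: "4 * pi * s > 0" using s by simp
  have nd: "normal_density 0 (sqrt (2 * s)) t = (1 / sqrt (4 * pi * s)) * exp (- t\<^sup>2 / (4 * s))" for t
    using s by (simp add: normal_density_def)
  have "(1 / sqrt (4 * pi * s)) ^ CARD('n) = ((4 * pi * s) powr (-1/2)) ^ CARD('n)"
    using p by (simp add: powr_minus_divide powr_half_sqrt)
  also have "\<dots> = (4 * pi * s) powr (- real CARD('n) / 2)"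
    using p by (subst powr_power) auto
  finally have const: "(1 / sqrt (4 * pi * s)) ^ CARD('n) = (4 * pi * s) powr (- real CARD('n) / 2)" .
  have expo: "(\<Sum>i\<in>UNIV. - (z$i)\<^sup>2 / (4 * s)) = - (norm z)\<^sup>2 / (4 * s)"
    by (simp add: norm_sq_cart sum_divide_distrib sum_negf)
  have "(\<Prod>i\<in>UNIV. normal_density 0 (sqrt (2 * s)) (z$i))
      = (1 / sqrt (4 * pi * s)) ^ CARD('n) * exp (\<Sum>i\<in>UNIV. - (z$i)\<^sup>2 / (4 * s))"
    unfolding nd prod.distrib prod_constant by (simp add: exp_sum)
  then show ?thesis unfolding expo const gauss_def by simp
qed

definition moment :: "real \<Rightarrow> nat \<Rightarrow> real" where
  "moment \<sigma> k = (\<integral>t. normal_density 0 \<sigma> t * t ^ k \<partial>lborel)"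

lemma moment_values:
  assumes s: "s > 0"
  shows "moment (sqrt (2 * s)) 0 = 1" "moment (sqrt (2 * s)) 1 = 0" "moment (sqrt (2 * s)) 2 = 2 * s"
    "moment (sqrt (2 * s)) 3 = 0" "moment (sqrt (2 * s)) 4 = 12 * s\<^sup>2"
proof -
  have \<sigma>: "sqrt (2 * s) > 0" using s by simp
  show "moment (sqrt (2 * s)) 0 = 1"
    unfolding moment_def using integral_normal_density[OF \<sigma>] by simp
  show "moment (sqrt (2 * s)) 1 = 0"
    unfolding moment_def using integral_normal_moment_odd[OF \<sigma>, of 0 0] by simp
  show "moment (sqrt (2 * s)) 3 = 0"
    unfolding moment_def using integral_normal_moment_odd[OF \<sigma>, of 0 1] by (simp add: numeral_3_eq_3)
  show "moment (sqrt (2 * s)) 2 = 2 * s"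
    unfolding moment_def using integral_normal_moment_even[OF \<sigma>, of 0 1] s by (simp add: numeral_2_eq_2)
  show "moment (sqrt (2 * s)) 4 = 12 * s\<^sup>2"
    unfolding moment_def using integral_normal_moment_even[OF \<sigma>, of 0 2] s
    by (simp add: fact_numeral power2_eq_square field_simps)
qed

lemma gauss_monomial:
  assumes s: "s > 0"
  shows "integrable lborel (\<lambda>z::real^'n::finite. gauss s z * (\<Prod>i\<in>UNIV. (z$i) ^ n i))
    \<and> (\<integral>z. gauss s z * (\<Prod>i\<in>UNIV. (z$i) ^ n i) \<partial>lborel) = (\<Prod>i\<in>UNIV. moment (sqrt (2 * s)) (n i))"
proof -
  have eq: "gauss s z * (\<Prod>i\<in>UNIV. (z$i) ^ n i)
      = (\<Prod>i\<in>UNIV. normal_density 0 (sqrt (2 * s)) (z$i) * (z$i) ^ n i)" for z :: "real^'n"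
    using s by (simp add: gauss_prod prod.distrib)
  have \<sigma>: "0 < sqrt (2 * s)" using s by simp
  have "\<And>i. integrable lborel (\<lambda>t. normal_density 0 (sqrt (2 * s)) t * t ^ n i)"
    using integrable_normal_moment[OF \<sigma>, of 0] by simp
  from lborel_integral_prod_cart[of "\<lambda>i t. normal_density 0 (sqrt (2 * s)) t * t ^ n i", OF this] show ?thesis unfolding eq moment_def by simp
qed

lemma gauss_total_mass:
  assumes s: "s > 0"
  shows "integrable lborel (gauss s :: real^'n::finite \<Rightarrow> real) \<and> (\<integral>z. gauss s (z::real^'n) \<partial>lborel) = 1"
  using gauss_monomial[OF s, of "\<lambda>_. 0"] moment_values(1)[OF s] by simp

text \<open>Exponent vector of the monomial \<open>z$i\<close>; sums of these describe quadratic and quartic monomials.\<close>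
definition unit_exp :: "'n \<Rightarrow> 'n \<Rightarrow> nat" where "unit_exp i l = (if l = i then 1 else 0)"

lemma prod_unit_exp: "(\<Prod>l\<in>UNIV. ((z::real^'n::finite)$l) ^ unit_exp i l) = z$i"
proof -
  have "(\<Prod>l\<in>UNIV. (z$l) ^ unit_exp i l) = (\<Prod>l\<in>UNIV. if l = i then z$l else 1)"
    by (rule prod.cong) (auto simp: unit_exp_def)
  then show ?thesis by simp
qed

lemma prod_power_add:
  "(\<Prod>l\<in>UNIV. ((z::real^'n::finite)$l) ^ (a l + b l)) = (\<Prod>l\<in>UNIV. (z$l) ^ a l) * (\<Prod>l\<in>UNIV. (z$l) ^ b l)"
  by (simp add: power_add prod.distrib)

text \<open>The same values with unary exponents, as produced by evaluating \<open>unit_exp\<close> sums.\<close>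
lemma moment_values_Suc:
  assumes s: "s > 0"
  shows "moment (sqrt (2 * s)) (Suc 0) = 0" "moment (sqrt (2 * s)) (Suc (Suc 0)) = 2 * s"
    "moment (sqrt (2 * s)) (Suc (Suc (Suc 0))) = 0" "moment (sqrt (2 * s)) (Suc (Suc (Suc (Suc 0)))) = 12 * s\<^sup>2"
  using moment_values[OF s] by (simp_all add: numeral_2_eq_2 numeral_3_eq_3 eval_nat_numeral)

lemma gauss_moment2_coord:
  assumes s: "s > 0"
  shows "integrable lborel (\<lambda>z::real^'n::finite. gauss s z * (z$i * z$j))
    \<and> (\<integral>z. gauss s z * (z$i * z$j) \<partial>lborel) = (if i = j then 2 * s else 0)"
proof -
  let ?n = "\<lambda>l. unit_exp i l + unit_exp j l"
  have mono: "(\<Prod>l\<in>UNIV. (z$l) ^ ?n l) = z$i * z$j" for z :: "real^'n"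
    by (simp only: prod_power_add prod_unit_exp)
  have "(\<Prod>l\<in>UNIV. moment (sqrt (2 * s)) (?n l)) = (if i = j then 2 * s else 0)"
  proof (cases "i = j")
    case True
    have "(\<Prod>l\<in>UNIV. moment (sqrt (2 * s)) (?n l)) = (\<Prod>l\<in>UNIV. if l = j then 2 * s else 1)"
      by (rule prod.cong) (auto simp: unit_exp_def True moment_values[OF s] moment_values_Suc[OF s])
    then show ?thesis using True by simp
  next
    case False
    have "moment (sqrt (2 * s)) (?n i) = 0"
      using False by (simp add: unit_exp_def moment_values_Suc[OF s])
    then show ?thesis using False by (intro trans[OF prod_zero]) auto
  qed
  with gauss_monomial[OF s, of ?n] show ?thesis unfolding mono by simp
qed

lemma gauss_moment4_coord:
  assumes s: "s > 0"
  shows "integrable lborel (\<lambda>z::real^'n::finite. gauss s z * (z$i * z$j * (z$k * z$k)))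
    \<and> (\<integral>z. gauss s z * (z$i * z$j * (z$k * z$k)) \<partial>lborel)
        = (if i = j then (if k = j then 12 * s\<^sup>2 else 4 * s\<^sup>2) else 0)"
proof -
  let ?n = "\<lambda>l. unit_exp i l + unit_exp j l + (unit_exp k l + unit_exp k l)"
  have mono: "(\<Prod>l\<in>UNIV. (z$l) ^ ?n l) = z$i * z$j * (z$k * z$k)" for z :: "real^'n"
    by (simp only: prod_power_add prod_unit_exp)
  have "(\<Prod>l\<in>UNIV. moment (sqrt (2 * s)) (?n l))
      = (if i = j then (if k = j then 12 * s\<^sup>2 else 4 * s\<^sup>2) else 0)"
  proof (cases "i = j")
    case True
    show ?thesis
    proof (cases "k = j")
      case True2: True
      have "(\<Prod>l\<in>UNIV. moment (sqrt (2 * s)) (?n l)) = (\<Prod>l\<in>UNIV. if l = j then 12 * s\<^sup>2 else 1)"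
        by (rule prod.cong) (auto simp: unit_exp_def True True2 moment_values[OF s] moment_values_Suc[OF s])
      then show ?thesis using True True2 by simp
    next
      case False2: False
      have "(\<Prod>l\<in>UNIV. moment (sqrt (2 * s)) (?n l))
          = (\<Prod>l\<in>UNIV. (if l = j then 2 * s else 1) * (if l = k then 2 * s else 1))"
        by (rule prod.cong)
           (use False2 in \<open>auto simp: unit_exp_def True moment_values[OF s] moment_values_Suc[OF s]\<close>)
      also have "\<dots> = 4 * s\<^sup>2" by (simp add: prod.distrib power2_eq_square)
      finally show ?thesis using True False2 by simp
    qed
  next
    case False
    have "moment (sqrt (2 * s)) (?n j) = 0"
      using False by (cases "k = j") (simp_all add: unit_exp_def moment_values_Suc[OF s])
    then show ?thesis using False by (intro trans[OF prod_zero]) auto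
  qed
  with gauss_monomial[OF s, of ?n] show ?thesis unfolding mono by simp
qed

text \<open>Doubling the variance absorbs the factor \<open>exp(|z|\<^sup>2/(8s))\<close>; this controls polynomial weights.\<close>
lemma gauss_times_exp:
  assumes s: "s > 0"
  shows "gauss s (z::real^'n::finite) * exp ((norm z)\<^sup>2 / (8 * s))
    = 2 powr (real CARD('n) / 2) * gauss (2 * s) z"
proof -
  let ?r = "- real CARD('n) / 2"
  have e: "exp (- (norm z)\<^sup>2 / (4 * s)) * exp ((norm z)\<^sup>2 / (8 * s)) = exp (- (norm z)\<^sup>2 / (4 * (2 * s)))"
    by (simp add: exp_add[symmetric] field_simps)
  have "(4 * pi * s) powr ?r = ((4 * pi * (2 * s)) / 2) powr ?r"
    by (rule arg_cong[where f="\<lambda>u. u powr ?r"]) simp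
  also have "\<dots> = (4 * pi * (2 * s)) powr ?r / 2 powr ?r"
    by (rule powr_divide; use s in auto)
  also have "\<dots> = 2 powr (real CARD('n) / 2) * (4 * pi * (2 * s)) powr ?r"
    by (simp add: powr_minus_divide field_simps)
  finally have c: "(4 * pi * s) powr ?r = 2 powr (real CARD('n) / 2) * (4 * pi * (2 * s)) powr ?r" .
  have "gauss s z * exp ((norm z)\<^sup>2 / (8 * s))
      = (4 * pi * s) powr ?r * (exp (- (norm z)\<^sup>2 / (4 * s)) * exp ((norm z)\<^sup>2 / (8 * s)))"
    unfolding gauss_def by (rule mult.assoc)
  also have "\<dots> = 2 powr (real CARD('n) / 2) * gauss (2 * s) z"
    unfolding e c gauss_def by (rule mult.assoc)
  finally show ?thesis .
qed

lemma power_le_fact_exp: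
  assumes y: "(y::real) \<ge> 0"
  shows "y ^ m \<le> fact m * exp y"
proof -
  obtain t where t: "exp y = (\<Sum>k<Suc m. y ^ k / fact k) + exp t / fact (Suc m) * y ^ Suc m"
    using Maclaurin_exp_le[of y "Suc m"] by blast
  have "y ^ m / fact m \<le> (\<Sum>k<Suc m. y ^ k / fact k)"
    by (rule member_le_sum[where f="\<lambda>k. y ^ k / fact k", of m]) (use y in auto)
  also have "\<dots> \<le> exp y" unfolding t using y by simp
  finally show ?thesis by (simp add: field_simps)
qed

lemma one_plus_power_le:
  assumes t: "(t::real) \<ge> 0"
  shows "(1 + t) ^ m \<le> 2 ^ m * (2 + t ^ (2 * m))"
proof (cases "t \<le> 1")
  case True
  have "(1 + t) ^ m \<le> 2 ^ m" by (rule power_mono) (use True t in auto)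
  also have "\<dots> \<le> 2 ^ m * (2 + t ^ (2 * m))" using t by simp
  finally show ?thesis .
next
  case False
  have "(1 + t) ^ m \<le> (2 * t) ^ m" by (rule power_mono) (use False in auto)
  also have "\<dots> = 2 ^ m * t ^ m" by (simp add: power_mult_distrib)
  also have "t ^ m \<le> t ^ (2 * m)" by (rule power_increasing) (use False in auto)
  then have "2 ^ m * t ^ m \<le> 2 ^ m * (2 + t ^ (2 * m))" by simp
  finally show ?thesis .
qed

lemma gauss_weight_pointwise:
  assumes s: "s > 0"
  shows "gauss s (z::real^'n::finite) * (1 + norm z) ^ m
    \<le> 2 ^ m * (2 * gauss s z + fact m * (8 * s) ^ m * (2 powr (real CARD('n) / 2) * gauss (2 * s) z))"
proof -
  let ?e = "exp ((norm z)\<^sup>2 / (8 * s))"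
  have "norm z ^ (2 * m) = (8 * s) ^ m * ((norm z)\<^sup>2 / (8 * s)) ^ m"
    using s by (simp add: power_mult power_divide)
  also have "\<dots> \<le> (8 * s) ^ m * (fact m * ?e)"
    by (rule mult_left_mono[OF power_le_fact_exp]) (use s in auto)
  finally have "2 ^ m * (2 + norm z ^ (2 * m)) \<le> 2 ^ m * (2 + (8 * s) ^ m * (fact m * ?e))"
    by (intro mult_left_mono add_left_mono) auto
  with one_plus_power_le[OF norm_ge_zero, of z m]
  have "(1 + norm z) ^ m \<le> 2 ^ m * (2 + (8 * s) ^ m * (fact m * ?e))"
    by (rule order_trans)
  then have "gauss s z * (1 + norm z) ^ m \<le> gauss s z * (2 ^ m * (2 + (8 * s) ^ m * (fact m * ?e)))"
    by (rule mult_left_mono) (use gauss_pos[OF s, of z] in auto)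
  also have "\<dots> = 2 ^ m * (2 * gauss s z + fact m * (8 * s) ^ m * (2 powr (real CARD('n) / 2) * gauss (2 * s) z))"
    unfolding gauss_times_exp[OF s, symmetric] by (simp add: algebra_simps)
  finally show ?thesis .
qed

definition weight_bound :: "nat \<Rightarrow> nat \<Rightarrow> real \<Rightarrow> real" where
  "weight_bound d m s = 2 ^ m * (2 + fact m * (8 * s) ^ m * 2 ^ d)"

lemma gauss_weight:
  assumes s: "s > 0"
  shows "integrable lborel (\<lambda>z::real^'n::finite. gauss s z * (1 + norm z) ^ m)
    \<and> (\<integral>z. gauss s (z::real^'n) * (1 + norm z) ^ m \<partial>lborel) \<le> weight_bound CARD('n) m s"
proof -
  define c where "c = fact m * (8 * s) ^ m"
  define B where "B z = 2 ^ m * (2 * gauss s z + c * (2 powr (real CARD('n) / 2) * gauss (2 * s) z))"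
    for z :: "real^'n"
  have s2: "2 * s > 0" using s by simp
  note mass = gauss_total_mass[OF s, where 'n='n] gauss_total_mass[OF s2, where 'n='n]
  have B_int: "integrable lborel B"
    and B_integral: "(\<integral>z. B z \<partial>lborel) = 2 ^ m * (2 + c * 2 powr (real CARD('n) / 2))"
    unfolding B_def using mass by simp_all
  have pointwise: "gauss s z * (1 + norm z) ^ m \<le> B z" for z
    unfolding B_def c_def by (rule gauss_weight_pointwise[OF s])
  have nonneg: "0 \<le> gauss s z * (1 + norm z) ^ m" for z :: "real^'n"
    using gauss_pos[OF s, of z] by simp
  have int: "integrable lborel (\<lambda>z::real^'n. gauss s z * (1 + norm z) ^ m)"
    by (rule Bochner_Integration.integrable_bound[OF B_int])
       (use pointwise nonneg in \<open>auto intro!: always_eventually order_trans[OF _ abs_ge_self]\<close>)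
  have "2 powr (real CARD('n) / 2) \<le> 2 powr (real CARD('n))" by (intro powr_mono) auto
  then have "c * 2 powr (real CARD('n) / 2) \<le> fact m * (8 * s) ^ m * 2 ^ CARD('n)"
    unfolding c_def using s by (intro mult_left_mono) (auto simp: powr_realpow)
  then have "(\<integral>z. B z \<partial>lborel) \<le> weight_bound CARD('n) m s"
    unfolding B_integral weight_bound_def by simp
  moreover have "(\<integral>z. gauss s (z::real^'n) * (1 + norm z) ^ m \<partial>lborel) \<le> (\<integral>z. B z \<partial>lborel)"
    using pointwise by (intro Bochner_Integration.integral_mono int B_int) auto
  ultimately show ?thesis using int by linarith
qed

lemma gauss_dominated:
  fixes f :: "real^'n::finite \<Rightarrow> 'b::{banach,second_countable_topology}"
  assumes s: "s > 0" and f [measurable]: "f \<in> borel_measurable borel"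
    and bound: "\<And>z. norm (f z) \<le> C * (1 + norm z) ^ m"
  shows "integrable lborel (\<lambda>z. gauss s z *\<^sub>R f z)
    \<and> norm (\<integral>z. gauss s z *\<^sub>R f z \<partial>lborel) \<le> C * weight_bound CARD('n) m s"
proof -
  have weight: "integrable lborel (\<lambda>z::real^'n. C * (gauss s z * (1 + norm z) ^ m))"
    "(\<integral>z. gauss s (z::real^'n) * (1 + norm z) ^ m \<partial>lborel) \<le> weight_bound CARD('n) m s"
    using gauss_weight[OF s, of m] by auto
  have "norm (f 0) \<le> C" using bound[of 0] by simp
  then have C: "C \<ge> 0" using norm_ge_zero order_trans by blast
  have dom: "norm (gauss s z *\<^sub>R f z) \<le> C * (gauss s z * (1 + norm z) ^ m)" for z
    using bound[of z] gauss_pos[OF s, of z] by (simp add: mult_left_mono algebra_simps)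
  then have "norm (gauss s z *\<^sub>R f z) \<le> norm (C * (gauss s z * (1 + norm z) ^ m))" for z
    by (metis abs_ge_self order_trans real_norm_def)
  then have int: "integrable lborel (\<lambda>z. gauss s z *\<^sub>R f z)"
    by (intro Bochner_Integration.integrable_bound[OF weight(1)] always_eventually) auto
  have "norm (\<integral>z. gauss s z *\<^sub>R f z \<partial>lborel) \<le> (\<integral>z. norm (gauss s z *\<^sub>R f z) \<partial>lborel)"
    by (rule integral_norm_bound)
  also have "\<dots> \<le> (\<integral>z. C * (gauss s (z::real^'n) * (1 + norm z) ^ m) \<partial>lborel)"
    by (rule Bochner_Integration.integral_mono) (use integrable_norm[OF int] weight(1) dom in auto)
  also have "\<dots> \<le> C * weight_bound CARD('n) m s"
    using weight(2) C by (simp add: mult_left_mono)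
  finally show ?thesis using int by blast
qed

lemma sum_if_eq_const:
  "(\<Sum>k\<in>(UNIV::'n::finite set). if k = j then a else b) = a + (real CARD('n) - 1) * b"
proof -
  have "(\<Sum>k\<in>(UNIV::'n set). if k = j then a else b) = (\<Sum>k\<in>(UNIV::'n set). b + (if k = j then a - b else 0))"
    by (rule sum.cong) auto
  also have "\<dots> = real CARD('n) * b + (a - b)" by (simp add: sum.distrib)
  finally show ?thesis by (simp add: algebra_simps)
qed

lemma sum_delta_if_eq_const:
  fixes w :: "real^'n::finite"
  shows "(\<Sum>k\<in>UNIV. \<Sum>i\<in>UNIV. w $ i * (if i = j then (if k = j then a else b) else 0))
      = w $ j * (a + (real CARD('n) - 1) * b)"
proof -
  have delta: "(\<Sum>i\<in>UNIV. w $ i * (if i = j then c else 0)) = w $ j * c" for c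
    by (simp add: if_distrib cong: if_cong)
  have "(\<Sum>k\<in>UNIV. \<Sum>i\<in>UNIV. w $ i * (if i = j then (if k = j then a else b) else 0))
      = (\<Sum>k\<in>UNIV. w $ j * (if k = j then a else b))"
    by (simp only: delta)
  also have "\<dots> = w $ j * (a + (real CARD('n) - 1) * b)"
    by (simp only: sum_distrib_left[symmetric] sum_if_eq_const)
  finally show ?thesis .
qed

lemma norm_scaleR_self_bound:
  fixes z :: "'a::real_normed_vector"
  assumes "\<bar>a\<bar> \<le> K * (1 + norm z) ^ m"
  shows "norm (a *\<^sub>R z) \<le> K * (1 + norm z) ^ Suc m"
proof -
  have "norm (a *\<^sub>R z) = \<bar>a\<bar> * norm z" by simp
  also have "\<dots> \<le> K * (1 + norm z) ^ m * (1 + norm z)"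
    using assms by (intro mult_mono) auto
  finally show ?thesis by (simp add: algebra_simps)
qed

lemma inner_bound: "\<bar>w \<bullet> z\<bar> \<le> norm w * (1 + norm z) ^ 1"
  using Cauchy_Schwarz_ineq2[of w z] by (simp add: order_trans[OF _ mult_left_mono])

lemma gauss_moment2:
  fixes w :: "real^'n::finite"
  assumes s: "s > 0"
  shows "integrable lborel (\<lambda>z. gauss s z *\<^sub>R ((w \<bullet> z) *\<^sub>R z))
    \<and> (\<integral>z. gauss s z *\<^sub>R ((w \<bullet> z) *\<^sub>R z) \<partial>lborel) = (2 * s) *\<^sub>R w"
proof -
  have "norm ((w \<bullet> z) *\<^sub>R z) \<le> norm w * (1 + norm z) ^ 2" for z
    using norm_scaleR_self_bound[OF inner_bound] by (simp add: numeral_2_eq_2)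
  moreover have "(\<lambda>z. (w \<bullet> z) *\<^sub>R z) \<in> borel_measurable borel" by measurable
  ultimately have int: "integrable lborel (\<lambda>z. gauss s z *\<^sub>R ((w \<bullet> z) *\<^sub>R z))"
    using gauss_dominated[OF s] by blast
  have "(\<integral>z. gauss s z *\<^sub>R ((w \<bullet> z) *\<^sub>R z) \<partial>lborel) $ j = 2 * s * w $ j" for j
  proof -
    have coord: "(gauss s z *\<^sub>R ((w \<bullet> z) *\<^sub>R z)) $ j = (\<Sum>i\<in>UNIV. w $ i * (gauss s z * (z$i * z$j)))" for z
      by (simp add: inner_vec_def sum_distrib_left sum_distrib_right algebra_simps)
    have "(\<integral>z. gauss s z *\<^sub>R ((w \<bullet> z) *\<^sub>R z) \<partial>lborel) $ j
        = (\<integral>z. (\<Sum>i\<in>UNIV. w $ i * (gauss s z * (z$i * z$j))) \<partial>lborel)"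
      unfolding coord[symmetric] by (rule integral_bounded_linear[OF bounded_linear_vec_nth int, symmetric])
    also have "\<dots> = (\<Sum>i\<in>UNIV. w $ i * (if i = j then 2 * s else 0))"
      using gauss_moment2_coord[OF s, where 'n='n] by simp
    also have "\<dots> = 2 * s * w $ j" by (simp add: if_distrib cong: if_cong)
    finally show ?thesis .
  qed
  then show ?thesis using int by (simp add: vec_eq_iff)
qed

lemma gauss_moment4:
  fixes w :: "real^'n::finite"
  assumes s: "s > 0"
  shows "integrable lborel (\<lambda>z. gauss s z *\<^sub>R (((norm z)\<^sup>2 * (w \<bullet> z)) *\<^sub>R z))
    \<and> (\<integral>z. gauss s z *\<^sub>R (((norm z)\<^sup>2 * (w \<bullet> z)) *\<^sub>R z) \<partial>lborel)
        = (4 * (real CARD('n) + 2) * s\<^sup>2) *\<^sub>R w"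
proof -
  have "norm (((norm z)\<^sup>2 * (w \<bullet> z)) *\<^sub>R z) \<le> norm w * (1 + norm z) ^ 4" for z
  proof -
    have "(norm z)\<^sup>2 \<le> (1 + norm z) ^ 2" by (intro power_mono) auto
    then have "\<bar>(norm z)\<^sup>2 * (w \<bullet> z)\<bar> \<le> (1 + norm z) ^ 2 * (norm w * (1 + norm z) ^ 1)"
      unfolding abs_mult using inner_bound[of w z] by (intro mult_mono) auto
    then have "\<bar>(norm z)\<^sup>2 * (w \<bullet> z)\<bar> \<le> norm w * (1 + norm z) ^ 3"
      by (simp add: eval_nat_numeral mult_ac)
    then have "norm (((norm z)\<^sup>2 * (w \<bullet> z)) *\<^sub>R z) \<le> norm w * (1 + norm z) ^ Suc 3"
      by (rule norm_scaleR_self_bound)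
    then show ?thesis by simp
  qed
  moreover have "(\<lambda>z. ((norm z)\<^sup>2 * (w \<bullet> z)) *\<^sub>R z) \<in> borel_measurable borel" by measurable
  ultimately have int: "integrable lborel (\<lambda>z. gauss s z *\<^sub>R (((norm z)\<^sup>2 * (w \<bullet> z)) *\<^sub>R z))"
    using gauss_dominated[OF s] by blast
  have "(\<integral>z. gauss s z *\<^sub>R (((norm z)\<^sup>2 * (w \<bullet> z)) *\<^sub>R z) \<partial>lborel) $ j
      = 4 * (real CARD('n) + 2) * s\<^sup>2 * w $ j" for j
  proof -
    have coord: "(gauss s z *\<^sub>R (((norm z)\<^sup>2 * (w \<bullet> z)) *\<^sub>R z)) $ j
        = (\<Sum>k\<in>UNIV. \<Sum>i\<in>UNIV. w $ i * (gauss s z * (z$i * z$j * (z$k * z$k))))" for z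
      by (simp only: norm_sq_cart)
         (simp add: inner_vec_def sum_distrib_left sum_distrib_right power2_eq_square algebra_simps)
    have "(\<integral>z. gauss s z *\<^sub>R (((norm z)\<^sup>2 * (w \<bullet> z)) *\<^sub>R z) \<partial>lborel) $ j
        = (\<integral>z. (\<Sum>k\<in>UNIV. \<Sum>i\<in>UNIV. w $ i * (gauss s z * (z$i * z$j * (z$k * z$k)))) \<partial>lborel)"
      unfolding coord[symmetric] by (rule integral_bounded_linear[OF bounded_linear_vec_nth int, symmetric])
    also have "\<dots> = (\<Sum>k\<in>UNIV. \<Sum>i\<in>UNIV. w $ i * (if i = j then (if k = j then 12 * s\<^sup>2 else 4 * s\<^sup>2) else 0))"
      using gauss_moment4_coord[OF s, where 'n='n] by simp
    also have "\<dots> = w $ j * (12 * s\<^sup>2 + (real CARD('n) - 1) * (4 * s\<^sup>2))"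
      by (rule sum_delta_if_eq_const)
    also have "\<dots> = 4 * (real CARD('n) + 2) * s\<^sup>2 * w $ j" by (simp add: algebra_simps)
    finally show ?thesis .
  qed
  then show ?thesis using int by (simp add: vec_eq_iff)
qed

text \<open>Lebesgue measure is invariant under \<open>z \<mapsto> -z\<close>, so odd functions integrate to zero.\<close>
lemma lborel_integral_odd:
  fixes f :: "'a::euclidean_space \<Rightarrow> 'b::{banach,second_countable_topology}"
  assumes [measurable]: "f \<in> borel_measurable borel" and odd: "\<And>x. f (- x) = - f x"
  shows "(\<integral>x. f x \<partial>lborel) = 0"
proof -
  have "lborel = density (distr lborel borel (\<lambda>x::'a. 0 + (-1) *\<^sub>R x)) (\<lambda>_. \<bar>-1::real\<bar> ^ DIM('a))"
    by (rule lborel_affine) simp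
  then have reflect: "(lborel::'a measure) = distr lborel borel uminus" by (simp add: density_1)
  have "(\<integral>x. f x \<partial>lborel) = (\<integral>x. f x \<partial>distr lborel borel uminus)"
    by (subst reflect[symmetric]) rule
  also have "\<dots> = (\<integral>x. f (- x) \<partial>lborel)"
    by (rule integral_distr) simp_all
  also have "\<dots> = - (\<integral>x. f x \<partial>lborel)" by (simp add: odd)
  finally show ?thesis by (simp add: eq_neg_iff_add_eq_0 scaleR_2[symmetric])
qed

lemma min_exp_minus_one_bound: "\<bar>min 1 (exp t) - 1\<bar> \<le> \<bar>t::real\<bar>"
proof (cases "t \<ge> 0")
  case False
  then have "exp t \<le> 1" by simp
  moreover have "min 1 (exp t) = exp t" "\<bar>t\<bar> = - t" using False \<open>exp t \<le> 1\<close> by auto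
  ultimately show ?thesis
    unfolding abs_le_iff using exp_ge_add_one_self[of t] by (intro conjI) linarith+
qed (simp add: min_def)

lemma min_exp_second_order: "\<bar>min 1 (exp t) - 1 - min 0 t\<bar> \<le> (t::real)\<^sup>2"
proof (cases "t \<ge> 0")
  case False
  have "1 - t \<le> exp (- t)" using exp_ge_add_one_self[of "-t"] by simp
  then have "exp t * (1 - t) \<le> 1"
    using mult_left_mono[of "1 - t" "exp (- t)" "exp t"] by (simp add: exp_minus)
  then have "exp t \<le> 1 / (1 - t)" using False by (simp add: field_simps)
  also have "\<dots> \<le> 1 + t + t\<^sup>2"
  proof -
    have "(1 - t) * (1 + t + t\<^sup>2) = 1 - t * t\<^sup>2" by (simp add: algebra_simps power2_eq_square)
    moreover have "t * t\<^sup>2 \<le> 0" using False by (intro mult_nonpos_nonneg) auto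
    ultimately show ?thesis using False by (simp add: field_simps)
  qed
  finally have "exp t \<le> 1 + t + t\<^sup>2" .
  moreover have "exp t \<le> 1" using False by simp
  moreover have "min 1 (exp t) = exp t" "min 0 t = t" using False \<open>exp t \<le> 1\<close> by auto
  ultimately show ?thesis
    unfolding abs_le_iff using exp_ge_add_one_self[of t] zero_le_power2[of t] by (intro conjI) linarith+
qed (simp add: min_def)

text \<open>The kink \<open>min 0 t\<close> splits into an odd and an even part.\<close>
lemma min_zero_eq: "min 0 t = (t - \<bar>t\<bar>) / (2::real)"
  by (simp add: min_def)

lemma min_exp_remainder_growth:
  fixes L C r \<epsilon> :: real
  assumes bound: "\<bar>L\<bar> \<le> C * (1 + r) ^ 3" and \<epsilon>: "\<epsilon> \<ge> 0"
  shows "\<bar>min 1 (exp (\<epsilon> * L)) - 1 - min 0 (\<epsilon> * L)\<bar> \<le> (\<epsilon> * C)\<^sup>2 * (1 + r) ^ 6"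
proof -
  have "\<bar>\<epsilon> * L\<bar> \<le> \<epsilon> * C * (1 + r) ^ 3"
    using mult_left_mono[OF bound \<epsilon>] \<epsilon> by (simp add: abs_mult mult.assoc)
  then have "\<bar>\<epsilon> * L\<bar>\<^sup>2 \<le> (\<epsilon> * C * (1 + r) ^ 3)\<^sup>2" by (rule power_mono) simp
  with min_exp_second_order[of "\<epsilon> * L"] show ?thesis
    by (simp add: power_mult_distrib power_mult[symmetric])
qed

text \<open>The kink \<open>|\<epsilon>L|\<close> of \<open>min 0 (\<epsilon>L)\<close> is even and drops out by symmetry.\<close>
lemma gauss_min_exp_linearisation:
  fixes L :: "real^'n::finite \<Rightarrow> real"
  assumes s: "s > 0" and \<epsilon>: "\<epsilon> \<ge> 0" and L [measurable]: "L \<in> borel_measurable borel"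
    and odd: "\<And>z. L (- z) = - L z" and bound: "\<And>z. \<bar>L z\<bar> \<le> C * (1 + norm z) ^ 3"
  defines "M \<equiv> \<lambda>z. min 1 (exp (\<epsilon> * L z)) - 1"
  shows "integrable lborel (\<lambda>z. gauss s z *\<^sub>R (M z *\<^sub>R z))
    \<and> norm ((\<integral>z. gauss s z *\<^sub>R (M z *\<^sub>R z) \<partial>lborel) - (\<epsilon> / 2) *\<^sub>R (\<integral>z. gauss s z *\<^sub>R (L z *\<^sub>R z) \<partial>lborel))
        \<le> (\<epsilon> * C)\<^sup>2 * weight_bound CARD('n) 7 s"
proof -
  define R where "R z = M z - min 0 (\<epsilon> * L z)" for z
  have [measurable]: "R \<in> borel_measurable borel" unfolding R_def M_def by measurable
  have linear: "norm (L z *\<^sub>R z) \<le> C * (1 + norm z) ^ 4"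
    and kink: "norm (\<bar>L z\<bar> *\<^sub>R z) \<le> C * (1 + norm z) ^ 4" for z
    using norm_scaleR_self_bound[OF bound] bound by (auto simp: eval_nat_numeral intro: norm_scaleR_self_bound)
  have "\<bar>R z\<bar> \<le> (\<epsilon> * C)\<^sup>2 * (1 + norm z) ^ 6" for z
    unfolding R_def M_def by (rule min_exp_remainder_growth[OF bound \<epsilon>])
  then have remainder: "norm (R z *\<^sub>R z) \<le> (\<epsilon> * C)\<^sup>2 * (1 + norm z) ^ 7" for z
    using norm_scaleR_self_bound[of "R z" _ z 6] by simp
  have "(\<lambda>z. L z *\<^sub>R z) \<in> borel_measurable borel" by measurable
  note I_lin = gauss_dominated[OF s this linear]
  have "(\<lambda>z. \<bar>L z\<bar> *\<^sub>R z) \<in> borel_measurable borel" by measurable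
  note I_kink = gauss_dominated[OF s this kink]
  have "(\<lambda>z. R z *\<^sub>R z) \<in> borel_measurable borel" by measurable
  note I_rem = gauss_dominated[OF s this remainder]
  have split: "gauss s z *\<^sub>R (M z *\<^sub>R z) = (\<epsilon> / 2) *\<^sub>R (gauss s z *\<^sub>R (L z *\<^sub>R z))
      - (\<epsilon> / 2) *\<^sub>R (gauss s z *\<^sub>R (\<bar>L z\<bar> *\<^sub>R z)) + gauss s z *\<^sub>R (R z *\<^sub>R z)" for z
  proof -
    have "gauss s z * M z = \<epsilon> / 2 * (gauss s z * L z) - \<epsilon> / 2 * (gauss s z * \<bar>L z\<bar>) + gauss s z * R z"
      using \<epsilon> by (simp add: R_def min_zero_eq abs_mult field_simps)
    then show ?thesis by (simp add: scaleR_add_left scaleR_diff_left)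
  qed
  have kink_vanishes: "(\<integral>z. gauss s z *\<^sub>R (\<bar>L z\<bar> *\<^sub>R z) \<partial>lborel) = 0"
    by (rule lborel_integral_odd) (auto simp: odd gauss_even)
  have int_M: "integrable lborel (\<lambda>z. gauss s z *\<^sub>R (M z *\<^sub>R z))"
    unfolding split
    by (intro Bochner_Integration.integrable_add Bochner_Integration.integrable_diff
        integrable_scaleR_right I_lin[THEN conjunct1] I_kink[THEN conjunct1] I_rem[THEN conjunct1])
  have "(\<integral>z. gauss s z *\<^sub>R (M z *\<^sub>R z) \<partial>lborel)
      = (\<epsilon> / 2) *\<^sub>R (\<integral>z. gauss s z *\<^sub>R (L z *\<^sub>R z) \<partial>lborel)
        - (\<epsilon> / 2) *\<^sub>R (\<integral>z. gauss s z *\<^sub>R (\<bar>L z\<bar> *\<^sub>R z) \<partial>lborel)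
        + (\<integral>z. gauss s z *\<^sub>R (R z *\<^sub>R z) \<partial>lborel)"
    unfolding split using I_lin[THEN conjunct1] I_kink[THEN conjunct1] I_rem[THEN conjunct1]
    by (simp only: Bochner_Integration.integral_add Bochner_Integration.integral_diff integral_scaleR_right
        Bochner_Integration.integrable_diff integrable_scaleR_right)
  then have "(\<integral>z. gauss s z *\<^sub>R (M z *\<^sub>R z) \<partial>lborel) - (\<epsilon> / 2) *\<^sub>R (\<integral>z. gauss s z *\<^sub>R (L z *\<^sub>R z) \<partial>lborel)
      = (\<integral>z. gauss s z *\<^sub>R (R z *\<^sub>R z) \<partial>lborel)"
    unfolding kink_vanishes by simp
  with int_M I_rem show ?thesis by simp
qed

text \<open>The exponent of the Metropolis factor, divided by \<open>\<epsilon>\<close>, for diffusivity \<open>s = D x\<close>,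
  \<open>u = \<nabla>D x\<close> and \<open>v = \<nabla>ln \<rho> x\<close> (see \<open>acc_eq\<close> below).\<close>
definition accept_exponent :: "real \<Rightarrow> real^'n::finite \<Rightarrow> real^'n \<Rightarrow> real^'n \<Rightarrow> real" where
  "accept_exponent s u v z = (- (real CARD('n) / (2 * s)) + (norm z)\<^sup>2 / (4 * s\<^sup>2)) * (u \<bullet> z) + v \<bullet> z"

lemma accept_exponent_measurable [measurable]: "accept_exponent s u v \<in> borel_measurable borel"
  unfolding accept_exponent_def[abs_def] by measurable

lemma accept_exponent_odd: "accept_exponent s u v (- z) = - accept_exponent s u v z"
  by (simp add: accept_exponent_def)

text \<open>The exact first moment: this is where the drift \<open>a = \<nabla>D + D \<nabla>ln \<rho>\<close> comes from.\<close>
lemma gauss_accept_exponent_moment: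
  fixes u v :: "real^'n::finite"
  assumes s: "s > 0"
  shows "(\<integral>z. gauss s z *\<^sub>R (accept_exponent s u v z *\<^sub>R z) \<partial>lborel) = 2 *\<^sub>R (u + s *\<^sub>R v)"
proof -
  define \<alpha> where "\<alpha> = - (real CARD('n) / (2 * s))"
  define \<gamma> where "\<gamma> = 1 / (4 * s\<^sup>2)"
  note m2u = gauss_moment2[OF s, of u] and m4u = gauss_moment4[OF s, of u] and m2v = gauss_moment2[OF s, of v]
  have split: "gauss s z *\<^sub>R (accept_exponent s u v z *\<^sub>R z)
      = \<alpha> *\<^sub>R (gauss s z *\<^sub>R ((u \<bullet> z) *\<^sub>R z)) + \<gamma> *\<^sub>R (gauss s z *\<^sub>R (((norm z)\<^sup>2 * (u \<bullet> z)) *\<^sub>R z))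
        + gauss s z *\<^sub>R ((v \<bullet> z) *\<^sub>R z)" for z
  proof -
    have "gauss s z * accept_exponent s u v z
        = \<alpha> * (gauss s z * (u \<bullet> z)) + \<gamma> * (gauss s z * ((norm z)\<^sup>2 * (u \<bullet> z))) + gauss s z * (v \<bullet> z)"
      by (simp add: accept_exponent_def \<alpha>_def \<gamma>_def algebra_simps)
    then show ?thesis by (simp add: scaleR_add_left)
  qed
  have "(\<integral>z. gauss s z *\<^sub>R (accept_exponent s u v z *\<^sub>R z) \<partial>lborel)
      = \<alpha> *\<^sub>R ((2 * s) *\<^sub>R u) + \<gamma> *\<^sub>R ((4 * (real CARD('n) + 2) * s\<^sup>2) *\<^sub>R u) + (2 * s) *\<^sub>R v"
    unfolding split using m2u m4u m2v
    by (simp only: Bochner_Integration.integral_add integral_scaleR_right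
        Bochner_Integration.integrable_add integrable_scaleR_right)
  also have "\<dots> = (\<alpha> * (2 * s) + \<gamma> * (4 * (real CARD('n) + 2) * s\<^sup>2)) *\<^sub>R u + (2 * s) *\<^sub>R v"
    by (simp add: scaleR_add_left)
  also have "\<alpha> * (2 * s) + \<gamma> * (4 * (real CARD('n) + 2) * s\<^sup>2) = 2"
    using s by (simp add: \<alpha>_def \<gamma>_def field_simps power2_eq_square)
  finally show ?thesis by (simp add: scaleR_add_right)
qed

lemma accept_exponent_bound:
  fixes u v z :: "real^'n::finite"
  assumes c: "c > 0" and sc: "c \<le> s" and u: "norm u \<le> U" and v: "norm v \<le> V"
  shows "\<bar>accept_exponent s u v z\<bar>
     \<le> (real CARD('n) * U / (2 * c) + U / (4 * c\<^sup>2) + V) * (1 + norm z) ^ 3"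
proof -
  define t where "t = norm z"
  define d where "d = real CARD('n)"
  have t0: "t \<ge> 0" and d0: "d \<ge> 0" and s: "s > 0" using c sc by (auto simp: t_def d_def)
  have U0: "U \<ge> 0" and V0: "V \<ge> 0" using u v norm_ge_zero order_trans by blast+
  have coef: "\<bar>- (d / (2 * s)) + t\<^sup>2 / (4 * s\<^sup>2)\<bar> \<le> d / (2 * c) + t\<^sup>2 / (4 * c\<^sup>2)"
  proof -
    have "\<bar>- (d / (2 * s)) + t\<^sup>2 / (4 * s\<^sup>2)\<bar> \<le> d / (2 * s) + t\<^sup>2 / (4 * s\<^sup>2)"
      using s d0 by (simp add: abs_le_iff)
    also have "d / (2 * s) \<le> d / (2 * c)" using c sc d0 by (intro divide_left_mono) auto
    also have "t\<^sup>2 / (4 * s\<^sup>2) \<le> t\<^sup>2 / (4 * c\<^sup>2)"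
      using c sc by (intro divide_left_mono mult_left_mono power_mono) auto
    finally show ?thesis by simp
  qed
  have uz: "\<bar>u \<bullet> z\<bar> \<le> U * t" and vz: "\<bar>v \<bullet> z\<bar> \<le> V * t"
    using Cauchy_Schwarz_ineq2[of u z] Cauchy_Schwarz_ineq2[of v z] u v t0 unfolding t_def
    by (meson mult_right_mono norm_ge_zero order_trans)+
  have "\<bar>accept_exponent s u v z\<bar> \<le> \<bar>- (d / (2 * s)) + t\<^sup>2 / (4 * s\<^sup>2)\<bar> * \<bar>u \<bullet> z\<bar> + \<bar>v \<bullet> z\<bar>"
    unfolding accept_exponent_def t_def d_def by (metis abs_mult abs_triangle_ineq)
  also have "\<dots> \<le> (d / (2 * c) + t\<^sup>2 / (4 * c\<^sup>2)) * (U * t) + V * t"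
    using coef uz vz by (intro add_mono mult_mono) auto
  also have "\<dots> = d * U / (2 * c) * t + U / (4 * c\<^sup>2) * t ^ 3 + V * t"
    by (simp add: field_simps power2_eq_square power3_eq_cube)
  also have "\<dots> \<le> d * U / (2 * c) * (1 + t) ^ 3 + U / (4 * c\<^sup>2) * (1 + t) ^ 3 + V * (1 + t) ^ 3"
  proof -
    have "t \<le> (1 + t) ^ 3" using power_increasing[of 1 3 "1 + t"] t0 by simp
    moreover have "t ^ 3 \<le> (1 + t) ^ 3" by (rule power_mono) (use t0 in auto)
    ultimately show ?thesis using c U0 V0 d0 by (intro add_mono mult_left_mono) auto
  qed
  also have "\<dots> = (d * U / (2 * c) + U / (4 * c\<^sup>2) + V) * (1 + t) ^ 3"
    by (simp add: algebra_simps)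
  finally show ?thesis unfolding t_def d_def .
qed

lemma gauss_acceptance_estimates:
  fixes u v :: "real^'n::finite" and g :: "real^'n \<Rightarrow> real"
  assumes s: "s > 0" and \<epsilon>: "\<epsilon> \<ge> 0"
    and L_bound: "\<And>z. \<bar>accept_exponent s u v z\<bar> \<le> C * (1 + norm z) ^ 3"
    and g [measurable]: "g \<in> borel_measurable borel" and g_bound: "\<And>z. \<bar>g z\<bar> \<le> Cg * (1 + norm z) ^ N"
  defines "M \<equiv> \<lambda>z. min 1 (exp (\<epsilon> * accept_exponent s u v z)) - 1"
  shows "integrable lborel (\<lambda>z. (gauss s z * M z) *\<^sub>R z)
    \<and> integrable lborel (\<lambda>z. g z * gauss s z * M z)
    \<and> norm ((\<integral>z. (gauss s z * M z) *\<^sub>R z \<partial>lborel) - \<epsilon> *\<^sub>R (u + s *\<^sub>R v))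
        \<le> (\<epsilon> * C)\<^sup>2 * weight_bound CARD('n) 7 s
    \<and> \<bar>\<integral>z. g z * gauss s z * M z \<partial>lborel\<bar> \<le> Cg * (\<epsilon> * C) * weight_bound CARD('n) (N + 3) s"
proof -
  have first: "integrable lborel (\<lambda>z. (gauss s z * M z) *\<^sub>R z)
    \<and> norm ((\<integral>z. (gauss s z * M z) *\<^sub>R z \<partial>lborel) - \<epsilon> *\<^sub>R (u + s *\<^sub>R v))
        \<le> (\<epsilon> * C)\<^sup>2 * weight_bound CARD('n) 7 s"
    using gauss_min_exp_linearisation[OF s \<epsilon> accept_exponent_measurable accept_exponent_odd L_bound]
    unfolding M_def gauss_accept_exponent_moment[OF s] by simp
  have "\<bar>g z * M z\<bar> \<le> Cg * (\<epsilon> * C) * (1 + norm z) ^ (N + 3)" for z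
  proof -
    have "\<bar>M z\<bar> \<le> \<epsilon> * C * (1 + norm z) ^ 3"
      using min_exp_minus_one_bound[of "\<epsilon> * accept_exponent s u v z"] L_bound[of z] \<epsilon>
      unfolding M_def by (simp add: abs_mult mult.assoc order_trans[OF _ mult_left_mono])
    then have "\<bar>g z\<bar> * \<bar>M z\<bar> \<le> (Cg * (1 + norm z) ^ N) * (\<epsilon> * C * (1 + norm z) ^ 3)"
      using g_bound[of z] by (intro mult_mono) auto
    then show ?thesis by (simp add: abs_mult power_add algebra_simps)
  qed
  then have "norm (g z * M z) \<le> Cg * (\<epsilon> * C) * (1 + norm z) ^ (N + 3)" for z by simp
  from gauss_dominated[OF s _ this] have second:
    "integrable lborel (\<lambda>z. g z * gauss s z * M z)
    \<and> \<bar>\<integral>z. g z * gauss s z * M z \<partial>lborel\<bar> \<le> Cg * (\<epsilon> * C) * weight_bound CARD('n) (N + 3) s"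
    unfolding M_def by (simp add: mult_ac)
  from first second show ?thesis by blast
qed

lemma gauss_deriv_diffusivity:
  assumes s: "s > 0"
  shows "((\<lambda>s. gauss s (z::real^'n::finite)) has_real_derivative
      gauss s z * (- (real CARD('n) / (2 * s)) + (norm z)\<^sup>2 / (4 * s\<^sup>2))) (at s)"
proof -
  let ?r = "- real CARD('n) / 2" and ?E = "exp (- (norm z)\<^sup>2 / (4 * s))"
  have "((\<lambda>s. gauss s z) has_real_derivative
      ?r * (4 * pi * s) powr (?r - 1) * (4 * pi) * ?E + (4 * pi * s) powr ?r * (?E * ((norm z)\<^sup>2 * 4 / (4 * s)\<^sup>2))) (at s)"
    unfolding gauss_def using s by (auto intro!: derivative_eq_intros simp: power2_eq_square)
  moreover have "?r * (4 * pi * s) powr (?r - 1) * (4 * pi) * ?E + (4 * pi * s) powr ?r * (?E * ((norm z)\<^sup>2 * 4 / (4 * s)\<^sup>2))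
      = gauss s z * (- (real CARD('n) / (2 * s)) + (norm z)\<^sup>2 / (4 * s\<^sup>2))"
  proof -
    have "(4 * pi * s) powr (?r - 1) = (4 * pi * s) powr ?r / (4 * pi * s)"
      using s by (simp add: powr_diff)
    then show ?thesis using s by (simp add: gauss_def field_simps power2_eq_square)
  qed
  ultimately show ?thesis by simp
qed

lemma Ck_line_deriv:
  assumes "Ck k f" "k \<ge> 1"
  shows "((\<lambda>t. f (x + t *\<^sub>R axis i 1)) has_real_derivative pd i f (x + t *\<^sub>R axis i 1)) (at t)"
proof -
  have "(\<lambda>s. ipd [] f ((x + t *\<^sub>R axis i 1) + s *\<^sub>R axis i 1)) field_differentiable (at 0)"
    using assms unfolding Ck_def by (auto dest: spec[of _ "[]"])
  then have "((\<lambda>s. f (x + (s + t) *\<^sub>R axis i 1)) has_real_derivative pd i f (x + t *\<^sub>R axis i 1)) (at 0)"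
    unfolding pd_def by (simp add: DERIV_deriv_iff_field_differentiable scaleR_add_left ac_simps)
  then show ?thesis using DERIV_shift[where f="\<lambda>u. f (x + u *\<^sub>R axis i 1)" and x=0 and z=t] by simp
qed

text \<open>Bounded partial derivatives give a Lipschitz bound in the \<open>\<ell>\<^sup>1\<close> distance, by moving
  along one coordinate at a time.\<close>
lemma lipschitz_by_partials:
  fixes f :: "real^'n::finite \<Rightarrow> real"
  assumes d: "\<And>i y t. ((\<lambda>t. f (y + t *\<^sub>R axis i 1)) has_real_derivative pd i f (y + t *\<^sub>R axis i 1)) (at t)"
    and b: "\<And>i y. \<bar>pd i f y\<bar> \<le> B"
  shows "\<bar>f x - f y\<bar> \<le> B * (\<Sum>i\<in>UNIV. \<bar>x$i - y$i\<bar>)"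
proof -
  have "\<forall>x y. (\<forall>i. i \<notin> S \<longrightarrow> x$i = y$i) \<longrightarrow> \<bar>f x - f y\<bar> \<le> B * (\<Sum>i\<in>S. \<bar>x$i - y$i\<bar>)"
    if "finite S" for S :: "'n set"
    using that
  proof (induction S rule: finite_induct)
    case empty
    then show ?case by (auto simp: vec_eq_iff[symmetric])
  next
    case (insert k S)
    show ?case
    proof (intro allI impI)
      fix x y :: "real^'n" assume xy: "\<forall>i. i \<notin> insert k S \<longrightarrow> x $ i = y $ i"
      define y' where "y' = y + (x$k - y$k) *\<^sub>R axis k 1"
      have y'i: "y'$i = (if i = k then x$k else y$i)" for i
        by (simp add: y'_def axis_def)
      have "\<forall>i. i \<notin> S \<longrightarrow> x$i = y'$i" using xy y'i by auto
      with insert.IH have "\<bar>f x - f y'\<bar> \<le> B * (\<Sum>i\<in>S. \<bar>x$i - y'$i\<bar>)" by blast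
      also have "(\<Sum>i\<in>S. \<bar>x$i - y'$i\<bar>) = (\<Sum>i\<in>S. \<bar>x$i - y$i\<bar>)"
        using insert.hyps(2) y'i by (intro sum.cong) auto
      finally have 1: "\<bar>f x - f y'\<bar> \<le> B * (\<Sum>i\<in>S. \<bar>x$i - y$i\<bar>)" .
      have "\<bar>f y' - f y\<bar> \<le> B * \<bar>x$k - y$k\<bar>"
        using field_differentiable_bound[of UNIV "\<lambda>t. f (y + t *\<^sub>R axis k 1)"
            "\<lambda>t. pd k f (y + t *\<^sub>R axis k 1)" B "x$k - y$k" 0] d b
        by (simp add: y'_def)
      with 1 have "\<bar>f x - f y\<bar> \<le> B * (\<Sum>i\<in>S. \<bar>x$i - y$i\<bar>) + B * \<bar>x$k - y$k\<bar>" by linarith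
      also have "\<dots> = B * (\<Sum>i\<in>insert k S. \<bar>x$i - y$i\<bar>)"
        using insert.hyps by (simp add: algebra_simps)
      finally show "\<bar>f x - f y\<bar> \<le> B * (\<Sum>i\<in>insert k S. \<bar>x$i - y$i\<bar>)" .
    qed
  qed
  from this[OF finite] show ?thesis by simp
qed

lemma bounded_gradient:
  fixes f :: "real^'n::finite \<Rightarrow> real"
  assumes k: "1 \<le> k" and bnd: "\<forall>is. 1 \<le> length is \<and> length is \<le> k \<longrightarrow> (\<exists>B. \<forall>x. \<bar>ipd is f x\<bar> \<le> B)"
  shows "\<exists>B. \<forall>i x. \<bar>pd i f x\<bar> \<le> B \<and> norm (grad f x) \<le> real CARD('n) * B"
proof -
  have "\<forall>i. \<exists>B. \<forall>x. \<bar>pd i f x\<bar> \<le> B" using bnd[rule_format, of "[_]"] k by simp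
  then obtain Bi where Bi: "\<And>i x. \<bar>pd i f x\<bar> \<le> Bi i" by metis
  define B where "B = (\<Sum>i\<in>UNIV. \<bar>Bi i\<bar>)"
  have pd_B: "\<bar>pd i f x\<bar> \<le> B" for i x
    using Bi[of i x] member_le_sum[of i UNIV "\<lambda>i. \<bar>Bi i\<bar>"] unfolding B_def by simp
  have "norm (grad f x) \<le> real CARD('n) * B" for x
  proof -
    have "norm (grad f x) \<le> (\<Sum>i\<in>UNIV. \<bar>grad f x $ i\<bar>)" by (rule norm_le_l1_cart)
    also have "\<dots> \<le> (\<Sum>i\<in>(UNIV::'n set). B)" unfolding grad_def using pd_B by (intro sum_mono) simp
    finally show ?thesis by simp
  qed
  with pd_B show ?thesis by blast
qed

lemma linear_growth:
  fixes f :: "real^'n::finite \<Rightarrow> real"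
  assumes "Ck k f" "k \<ge> 1" and B: "\<And>i x. \<bar>pd i f x\<bar> \<le> B"
  shows "f x \<le> (\<bar>f 0\<bar> + real CARD('n) * \<bar>B\<bar>) * (1 + norm x)"
proof -
  have "\<bar>f x - f 0\<bar> \<le> B * (\<Sum>i\<in>UNIV. \<bar>x$i - 0$i\<bar>)"
    by (rule lipschitz_by_partials[OF Ck_line_deriv[OF assms(1,2)] B])
  also have "\<dots> \<le> \<bar>B\<bar> * (\<Sum>i\<in>(UNIV::'n set). norm x)"
    by (intro mult_mono sum_mono) (auto simp: component_le_norm_cart sum_nonneg)
  finally have "f x - f 0 \<le> real CARD('n) * \<bar>B\<bar> * norm x" by (simp add: abs_le_iff mult_ac)
  then have "f x \<le> \<bar>f 0\<bar> + real CARD('n) * \<bar>B\<bar> * norm x" using abs_ge_self[of "f 0"] by linarith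
  also have "\<dots> \<le> (\<bar>f 0\<bar> + real CARD('n) * \<bar>B\<bar>) * (1 + norm x)" by (simp add: algebra_simps)
  finally show ?thesis .
qed

lemma pd_ln:
  assumes "Ck k \<rho>" "k \<ge> 1" and pos: "\<forall>x. \<rho> x > 0"
  shows "pd i (\<lambda>y. ln (\<rho> y)) x = pd i \<rho> x / \<rho> x"
proof -
  have "((\<lambda>t. ln (\<rho> (x + t *\<^sub>R axis i 1))) has_real_derivative (1 / \<rho> x) * pd i \<rho> x) (at 0)"
    using DERIV_chain2[OF DERIV_ln_divide Ck_line_deriv[OF assms(1,2), of x i 0]] pos by simp
  then show ?thesis unfolding pd_def by (simp add: DERIV_imp_deriv)
qed

lemma pd_qk:
  fixes D :: "real^'n::finite \<Rightarrow> real"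
  assumes "Ck k D" "k \<ge> 1" and pos: "D x > 0"
  shows "pd i (\<lambda>y. qk D y z) x
    = qk D x z * (- (real CARD('n) / (2 * D x)) + (norm z)\<^sup>2 / (4 * (D x)\<^sup>2)) * pd i D x"
proof -
  have "((\<lambda>t. gauss (D (x + t *\<^sub>R axis i 1)) z) has_real_derivative
      gauss (D x) z * (- (real CARD('n) / (2 * D x)) + (norm z)\<^sup>2 / (4 * (D x)\<^sup>2)) * pd i D x) (at 0)"
  proof -
    have "D (x + 0 *\<^sub>R axis i 1) > 0" using pos by simp
    from DERIV_chain2[OF gauss_deriv_diffusivity[OF this] Ck_line_deriv[OF assms(1,2), of x i 0]]
    show ?thesis by simp
  qed
  then show ?thesis unfolding pd_def qk_gauss by (rule DERIV_imp_deriv)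
qed

text \<open>The Metropolis factor \<open>\<beta>\<close> in closed form: the logarithmic derivatives of \<open>q(\<cdot>, z)\<close> and
  \<open>\<rho>\<close> turn its exponent into \<open>\<epsilon>\<close> times the acceptance exponent.\<close>
lemma acc_eq:
  fixes D \<rho> :: "real^'n::finite \<Rightarrow> real"
  assumes CD: "Ck k D" and C\<rho>: "Ck k \<rho>" and k: "k \<ge> 1" and Dp: "D x > 0" and \<rho>p: "\<forall>x. \<rho> x > 0"
  shows "acc D \<rho> x z \<epsilon> = min 1 (exp (\<epsilon> * accept_exponent (D x) (grad D x) (grad (\<lambda>y. ln (\<rho> y)) x) z))"
proof -
  define c where "c = - (real CARD('n) / (2 * D x)) + (norm z)\<^sup>2 / (4 * (D x)\<^sup>2)"
  have "grad (\<lambda>y. qk D y z) x = (qk D x z * c) *\<^sub>R grad D x"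
    unfolding grad_def c_def by (simp add: vec_eq_iff pd_qk[OF CD k Dp])
  moreover have "qk D x z > 0" by (simp add: qk_gauss gauss_pos Dp)
  ultimately have q: "\<epsilon> * (grad (\<lambda>y. qk D y z) x \<bullet> z) / qk D x z = \<epsilon> * (c * (grad D x \<bullet> z))" by simp
  have "grad \<rho> x \<bullet> z / \<rho> x = grad (\<lambda>y. ln (\<rho> y)) x \<bullet> z"
    unfolding grad_def inner_vec_def by (simp add: pd_ln[OF C\<rho> k \<rho>p] sum_divide_distrib)
  then have r: "\<epsilon> * (grad \<rho> x \<bullet> z) / \<rho> x = \<epsilon> * (grad (\<lambda>y. ln (\<rho> y)) x \<bullet> z)"
    by (simp add: times_divide_eq_right[symmetric] del: times_divide_eq_right)
  show ?thesis unfolding acc_def q r accept_exponent_def c_def[symmetric] by (simp add: algebra_simps)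
qed

lemma poly_fun_measurable: "g \<in> poly_fun \<Longrightarrow> g \<in> borel_measurable borel"
  by (induction rule: poly_fun.induct) auto

lemma poly_fun_growth:
  fixes g :: "real^'n::finite \<Rightarrow> real"
  assumes "g \<in> poly_fun"
  shows "\<exists>C N. C \<ge> 0 \<and> (\<forall>z. \<bar>g z\<bar> \<le> C * (1 + norm z) ^ N)"
  using assms
proof (induction rule: poly_fun.induct)
  case (const c)
  then show ?case by (intro exI[of _ "\<bar>c\<bar>"] exI[of _ 0]) simp
next
  case (coord i)
  have "\<bar>z $ i\<bar> \<le> 1 * (1 + norm z) ^ 1" for z :: "real^'n"
    using component_le_norm_cart[of z i] by simp
  then show ?case by (intro exI[of _ "1::real"] exI[of _ "1::nat"]) simp
next
  case (add f g)
  then obtain C1 N1 C2 N2 where 1: "C1 \<ge> 0" "\<forall>z. \<bar>f z\<bar> \<le> C1 * (1 + norm z) ^ N1"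
    and 2: "C2 \<ge> 0" "\<forall>z. \<bar>g z\<bar> \<le> C2 * (1 + norm z) ^ N2" by blast
  have "\<bar>f z + g z\<bar> \<le> (C1 + C2) * (1 + norm z) ^ max N1 N2" for z :: "real^'n"
  proof -
    have "\<bar>f z + g z\<bar> \<le> C1 * (1 + norm z) ^ N1 + C2 * (1 + norm z) ^ N2"
      using 1(2) 2(2) abs_triangle_ineq[of "f z" "g z"] by (meson add_mono order_trans)
    also have "\<dots> \<le> C1 * (1 + norm z) ^ max N1 N2 + C2 * (1 + norm z) ^ max N1 N2"
      using 1(1) 2(1) by (intro add_mono mult_left_mono power_increasing) auto
    finally show ?thesis by (simp add: algebra_simps)
  qed
  then show ?case using 1 2 by (intro exI[of _ "C1 + C2"] exI[of _ "max N1 N2"]) auto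
next
  case (mult f g)
  then obtain C1 N1 C2 N2 where 1: "C1 \<ge> 0" "\<forall>z. \<bar>f z\<bar> \<le> C1 * (1 + norm z) ^ N1"
    and 2: "C2 \<ge> 0" "\<forall>z. \<bar>g z\<bar> \<le> C2 * (1 + norm z) ^ N2" by blast
  have "\<bar>f z * g z\<bar> \<le> (C1 * C2) * (1 + norm z) ^ (N1 + N2)" for z :: "real^'n"
  proof -
    have "\<bar>f z\<bar> * \<bar>g z\<bar> \<le> (C1 * (1 + norm z) ^ N1) * (C2 * (1 + norm z) ^ N2)"
      using 1 2 by (intro mult_mono) auto
    then show ?thesis by (simp add: abs_mult power_add algebra_simps)
  qed
  then show ?case using 1 2 by (intro exI[of _ "C1 * C2"] exI[of _ "N1 + N2"]) auto
qed

lemma weight_bound_poly_growth: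
  fixes f :: "'a::real_normed_vector \<Rightarrow> real"
  assumes f: "\<And>x. 0 < f x" "\<And>x. f x \<le> E * (1 + norm x)" and C: "C \<ge> 0"
  shows "poly_growth (\<lambda>x. C * weight_bound d m (f x))"
  unfolding poly_growth_def
proof (intro exI allI)
  fix x :: 'a
  have E: "E \<ge> 0" using f[of 0] by simp
  have "(8 * f x) ^ m \<le> (8 * (E * (1 + norm x))) ^ m"
    using f[of x] by (intro power_mono) auto
  then have "(8 * f x) ^ m \<le> (8 * E) ^ m * (1 + norm x) ^ m" by (simp add: power_mult_distrib)
  moreover have "1 \<le> (1 + norm x) ^ m" by simp
  ultimately have "weight_bound d m (f x) \<le> 2 ^ m * (2 * (1 + norm x) ^ m + fact m * ((8 * E) ^ m * (1 + norm x) ^ m) * 2 ^ d)"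
    unfolding weight_bound_def by (intro mult_left_mono add_mono mult_right_mono) auto
  also have "\<dots> = 2 ^ m * (2 + fact m * (8 * E) ^ m * 2 ^ d) * (1 + norm x) ^ m"
    by (simp add: algebra_simps)
  finally have "weight_bound d m (f x) \<le> 2 ^ m * (2 + fact m * (8 * E) ^ m * 2 ^ d) * (1 + norm x) ^ m" .
  moreover have "weight_bound d m (f x) \<ge> 0" using f[of x] by (simp add: weight_bound_def)
  ultimately show "\<bar>C * weight_bound d m (f x)\<bar> \<le> (C * (2 ^ m * (2 + fact m * (8 * E) ^ m * 2 ^ d))) * (1 + norm x) ^ m"
    using C by (simp add: abs_mult mult.assoc mult_left_mono)
qed

theorem lemma3:
  fixes D \<rho> :: "real^'n::finite \<Rightarrow> real" and g :: "real^'n \<Rightarrow> real"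
  assumes "Ck 4 D" and "Ck 4 \<rho>" and "\<forall>x. \<rho> x > 0"
    and "\<forall>is. 1 \<le> length is \<and> length is \<le> 4 \<longrightarrow> (\<exists>B. \<forall>x. \<bar>ipd is D x\<bar> \<le> B)"
    and "\<forall>is. 1 \<le> length is \<and> length is \<le> 4 \<longrightarrow> (\<exists>B. \<forall>x. \<bar>ipd is (\<lambda>y. ln (\<rho> y)) x\<bar> \<le> B)"
    and "poly_growth (\<lambda>x. norm (hess D x))"
    and "poly_growth (\<lambda>x. norm (hess (\<lambda>y. ln (\<rho> y)) x))"
    and "\<exists>c>0. \<forall>x. D x \<ge> c"
    and "g \<in> poly_fun"
  shows "\<exists>K Ks. poly_growth K \<and> poly_growth Ks \<and>
     (\<forall>x \<epsilon>. 0 < \<epsilon> \<and> \<epsilon> \<le> 1 \<longrightarrow>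
        integrable lborel (\<lambda>z. (qk D x z * (acc D \<rho> x z \<epsilon> - 1)) *\<^sub>R z) \<and>
        integrable lborel (\<lambda>z. g z * qk D x z * (acc D \<rho> x z \<epsilon> - 1)) \<and>
        norm ((\<integral>z. (qk D x z * (acc D \<rho> x z \<epsilon> - 1)) *\<^sub>R z \<partial>lborel) - \<epsilon> *\<^sub>R drift D \<rho> x)
          \<le> K x * \<epsilon>\<^sup>2 \<and>
        \<bar>\<integral>z. g z * qk D x z * (acc D \<rho> x z \<epsilon> - 1) \<partial>lborel\<bar> \<le> Ks x * \<epsilon>)"
proof -
  let ?d = "real CARD('n)" and ?lr = "\<lambda>y. ln (\<rho> y)"
  obtain c where c: "c > 0" and Dc: "\<And>x. c \<le> D x" using assms(8) by blast
  have four: "(1::nat) \<le> 4" by simp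
  have Dpos: "D x > 0" for x using c Dc[of x] by linarith
  obtain U where U: "\<And>i x. \<bar>pd i D x\<bar> \<le> U" "\<And>x. norm (grad D x) \<le> ?d * U"
    using bounded_gradient[OF four assms(4)] by auto
  obtain V where V: "\<And>x. norm (grad ?lr x) \<le> ?d * V"
    using bounded_gradient[OF four assms(5)] by auto
  obtain Cg N where Cg: "Cg \<ge> 0" and g_bound: "\<And>z. \<bar>g z\<bar> \<le> Cg * (1 + norm z) ^ N"
    using poly_fun_growth[OF assms(9)] by blast
  define C where "C = ?d * (?d * U) / (2 * c) + ?d * U / (4 * c\<^sup>2) + ?d * V"
  have L_bound: "\<bar>accept_exponent (D x) (grad D x) (grad ?lr x) z\<bar> \<le> C * (1 + norm z) ^ 3" for x z
    unfolding C_def by (rule accept_exponent_bound[OF c Dc U(2) V])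
  have "\<bar>accept_exponent (D 0) (grad D 0) (grad ?lr 0) 0\<bar> \<le> C" using L_bound[of 0 0] by simp
  then have "C \<ge> 0" using abs_ge_zero order_trans by blast
  define K where "K x = C\<^sup>2 * weight_bound CARD('n) 7 (D x)" for x
  define Ks where "Ks x = Cg * C * weight_bound CARD('n) (N + 3) (D x)" for x
  have growth: "poly_growth K" "poly_growth Ks"
    unfolding K_def[abs_def] Ks_def[abs_def] using Dpos linear_growth[OF assms(1) four U(1)] \<open>C \<ge> 0\<close> Cg
    by (auto intro!: weight_bound_poly_growth)
  have "integrable lborel (\<lambda>z. (qk D x z * (acc D \<rho> x z \<epsilon> - 1)) *\<^sub>R z) \<and>
        integrable lborel (\<lambda>z. g z * qk D x z * (acc D \<rho> x z \<epsilon> - 1)) \<and>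
        norm ((\<integral>z. (qk D x z * (acc D \<rho> x z \<epsilon> - 1)) *\<^sub>R z \<partial>lborel) - \<epsilon> *\<^sub>R drift D \<rho> x)
          \<le> K x * \<epsilon>\<^sup>2 \<and>
        \<bar>\<integral>z. g z * qk D x z * (acc D \<rho> x z \<epsilon> - 1) \<partial>lborel\<bar> \<le> Ks x * \<epsilon>" if "0 < \<epsilon>" for x \<epsilon>
    using gauss_acceptance_estimates[OF Dpos less_imp_le[OF that] L_bound poly_fun_measurable[OF assms(9)] g_bound]
    unfolding qk_gauss acc_eq[OF assms(1,2) four Dpos assms(3)] drift_def K_def Ks_def
    by (simp add: power_mult_distrib mult_ac)
  with growth show ?thesis by blast
qed

end
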